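(* Let $X$ and $Y$ be independent random vectors in $\mathbb{R}^m$ and $\mathbb{R}^n$, and let $X_1,X_2,\dots$ and $Y_1,Y_2,\dots$ be independent random vectors (all mutually independent) with $\mathcal L(X_k)=\mathcal L(X)$ and $\mathcal L(Y_k)=\mathcal L(Y)$. For $N\in\mathbb{N}$, $s\in\mathbb{R}^m$, $t\in\mathbb{R}^n$ let $$Z_N(s,t)=\frac1N\sum_{k=1}^Ne^{i\langle s,X_k\rangle+i\langle t,Y_k\rangle}-\frac1{N^2}\sum_{k,l=1}^Ne^{i\langle s,X_k\rangle+i\langle t,Y_l\rangle}.$$ Then for all $s,s'\in\mathbb{R}^m$, $t,t'\in\mathbb{R}^n$, $$\mathbb{E}\big(Z_N(s,t)\overline{Z_N(s',t')}\big)=\frac{N-1}{N^2}\big(f_X(s-s')-f_X(s)\overline{f_X(s')}\big)\big(f_Y(t-t')-f_Y(t)\overline{f_Y(t')}\big),$$ where $f_X,f_Y$ are the characteristic functions of $X,Y$. *)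

theory Defs
  imports "HOL-Probability.Probability"
begin

definition charfun_vec :: "'a measure \<Rightarrow> ('a \<Rightarrow> 'b::euclidean_space) \<Rightarrow> 'b \<Rightarrow> complex" where
  "charfun_vec M V s = (LINT \<omega>|M. exp (\<i> * complex_of_real (s \<bullet> V \<omega>)))"

text \<open>Mutual independence of the whole family X_1, X_2, ..., Y_1, Y_2, ... (indices k >= 1),
  written out as in indep_vars_def2 (the two families have different value types, so the
  index set is a sum type).\<close>
definition mutually_indep_seqs ::
  "'a measure \<Rightarrow> (nat \<Rightarrow> 'a \<Rightarrow> 'm::euclidean_space) \<Rightarrow> (nat \<Rightarrow> 'a \<Rightarrow> 'n::euclidean_space) \<Rightarrow> bool" where
  "mutually_indep_seqs M Xs Ys \<longleftrightarrow>
     (\<forall>k\<ge>1. Xs k \<in> borel_measurable M) \<and> (\<forall>k\<ge>1. Ys k \<in> borel_measurable M) \<and>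
     prob_space.indep_sets M
       (\<lambda>i. case i of
              Inl k \<Rightarrow> {Xs k -` A \<inter> space M | A. A \<in> sets borel}
            | Inr k \<Rightarrow> {Ys k -` B \<inter> space M | B. B \<in> sets borel})
       (Inl ` {1..} \<union> Inr ` {1..})"

definition Z_N :: "(nat \<Rightarrow> 'a \<Rightarrow> 'm::euclidean_space) \<Rightarrow> (nat \<Rightarrow> 'a \<Rightarrow> 'n::euclidean_space) \<Rightarrow>
    nat \<Rightarrow> 'm \<Rightarrow> 'n \<Rightarrow> 'a \<Rightarrow> complex" where
  "Z_N Xs Ys N s t \<omega> =
     (1 / of_nat N) * (\<Sum>k=1..N. exp (\<i> * complex_of_real (s \<bullet> Xs k \<omega>) + \<i> * complex_of_real (t \<bullet> Ys k \<omega>)))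
   - (1 / of_nat N ^ 2) * (\<Sum>k=1..N. \<Sum>l=1..N. exp (\<i> * complex_of_real (s \<bullet> Xs k \<omega>) + \<i> * complex_of_real (t \<bullet> Ys l \<omega>)))"

end

theory Submission
  imports Defs
begin

(*
  Write Z_N(s,t) = sum_{k,l} w(k,l) e(s,X_k) e(t,Y_l) with e(s,x) = exp(i<s,x>) and
  w(k,l) = [k = l]/N - 1/N^2, a matrix whose rows and columns sum to zero. The second
  moment is then a fourfold sum of w(k,l) w(k',l') E[e(s,X_k) e(t,Y_l) conj(e(s',X_k') e(t',Y_l'))],
  and by independence and equidistribution each expectation factors as A(k,k') B(l,l'),
  where A is f_X(s - s') on the diagonal and f_X(s) conj(f_X(s')) off it (B likewise for Y).
  Since w is doubly centred, the constant off-diagonal parts of A and B are annihilated,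
  leaving (A_diag - A_off) (B_diag - B_off) sum_{k,l} w(k,l)^2, and that last sum is (N - 1)/N^2.
*)

lemma borel_measurable_cis [measurable (raw)]:
  "f \<in> borel_measurable M \<Longrightarrow> (\<lambda>x. cis (f x)) \<in> borel_measurable M"
  unfolding cis_conv_exp by measurable

lemma (in finite_measure) integrable_cis:
  "f \<in> borel_measurable M \<Longrightarrow> integrable M (\<lambda>\<omega>. cis (f \<omega>))"
  by (rule integrable_const_bound[where B=1]) auto

lemma prod_cis: "(\<Prod>j\<in>S. cis (f j)) = cis (\<Sum>j\<in>S. f j)"
  by (induction S rule: infinite_finite_induct) (simp_all add: cis_mult)

lemma charfun_vec_cis: "charfun_vec M V s = (LINT \<omega>|M. cis (s \<bullet> V \<omega>))"
  by (simp add: charfun_vec_def cis_conv_exp)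

lemma charfun_vec_zero: "prob_space M \<Longrightarrow> charfun_vec M V 0 = 1"
  by (simp add: charfun_vec_cis prob_space.prob_space)

lemma charfun_vec_uminus: "charfun_vec M V (- s) = cnj (charfun_vec M V s)"
  by (simp add: charfun_vec_cis flip: cis_cnj)

lemma charfun_vec_distr_eq:
  assumes "V \<in> borel_measurable M" "W \<in> borel_measurable M"
    and "distr M borel V = distr M borel W"
  shows "charfun_vec M V = charfun_vec M W"
proof
  fix s
  have "charfun_vec M V s = (LINT x|distr M borel V. cis (s \<bullet> x))"
    unfolding charfun_vec_cis using assms(1) by (simp add: integral_distr)
  also have "\<dots> = charfun_vec M W s"
    unfolding charfun_vec_cis assms(3) using assms(2) by (simp add: integral_distr)
  finally show "charfun_vec M V s = charfun_vec M W s" .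
qed

lemma preimage_comp_sets_borel_subset:
  fixes f :: "'b::topological_space \<Rightarrow> 'c::topological_space" and V :: "'a \<Rightarrow> 'b"
  assumes "f \<in> borel_measurable borel"
  shows "{(\<lambda>\<omega>. f (V \<omega>)) -` A \<inter> space M | A. A \<in> sets borel} \<subseteq>
    {V -` B \<inter> space M | B. B \<in> sets borel}"
proof clarify
  fix A :: "'c set" assume "A \<in> sets borel"
  then have "f -` A \<in> sets borel"
    using measurable_sets_borel[OF assms] by simp
  then show "\<exists>B. (\<lambda>\<omega>. f (V \<omega>)) -` A \<inter> space M = V -` B \<inter> space M \<and> B \<in> sets borel"
    by (intro exI[of _ "f -` A"]) auto
qed

lemma (in prob_space) mutually_indep_seqs_indep_vars:
  fixes f :: "nat \<Rightarrow> 'm::euclidean_space \<Rightarrow> 'c::topological_space"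
    and g :: "nat \<Rightarrow> 'n::euclidean_space \<Rightarrow> 'c"
  assumes ind: "mutually_indep_seqs M Xs Ys" and S: "S \<subseteq> {1..}"
    and f: "\<And>j. j \<in> S \<Longrightarrow> f j \<in> borel_measurable borel"
    and g: "\<And>j. j \<in> S \<Longrightarrow> g j \<in> borel_measurable borel"
  shows "indep_vars (\<lambda>_. borel)
           (\<lambda>i \<omega>. case i of Inl j \<Rightarrow> f j (Xs j \<omega>) | Inr j \<Rightarrow> g j (Ys j \<omega>)) (Inl ` S \<union> Inr ` S)"
  unfolding indep_vars_def2
proof (intro conjI ballI)
  fix i assume "i \<in> Inl ` S \<union> Inr ` S"
  then consider (X) j where "j \<in> S" "i = Inl j" | (Y) j where "j \<in> S" "i = Inr j"
    by blast
  then show "random_variable borel (\<lambda>\<omega>. case i of Inl j \<Rightarrow> f j (Xs j \<omega>) | Inr j \<Rightarrow> g j (Ys j \<omega>))"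
  proof cases
    case X
    then have "Xs j \<in> borel_measurable M"
      using ind S by (auto simp: mutually_indep_seqs_def)
    with X f show ?thesis
      by (simp add: measurable_compose[of "Xs j"])
  next
    case Y
    then have "Ys j \<in> borel_measurable M"
      using ind S by (auto simp: mutually_indep_seqs_def)
    with Y g show ?thesis
      by (simp add: measurable_compose[of "Ys j"])
  qed
next
  have "indep_sets (\<lambda>i. case i of
              Inl k \<Rightarrow> {Xs k -` A \<inter> space M | A. A \<in> sets borel}
            | Inr k \<Rightarrow> {Ys k -` B \<inter> space M | B. B \<in> sets borel}) (Inl ` S \<union> Inr ` S)"
  proof (rule indep_sets_mono_index)
    show "indep_sets (\<lambda>i. case i of
              Inl k \<Rightarrow> {Xs k -` A \<inter> space M | A. A \<in> sets borel}
            | Inr k \<Rightarrow> {Ys k -` B \<inter> space M | B. B \<in> sets borel}) (Inl ` {1..} \<union> Inr ` {1..})"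
      using ind unfolding mutually_indep_seqs_def by (elim conjE)
    show "Inl ` S \<union> Inr ` S \<subseteq> Inl ` {1..} \<union> Inr ` {1..}"
      using S by blast
  qed
  then show "indep_sets (\<lambda>i. {(\<lambda>\<omega>. case i of Inl j \<Rightarrow> f j (Xs j \<omega>) | Inr j \<Rightarrow> g j (Ys j \<omega>)) -` A \<inter> space M
      | A. A \<in> sets borel}) (Inl ` S \<union> Inr ` S)"
  proof (rule indep_sets_mono_sets)
    fix i assume "i \<in> Inl ` S \<union> Inr ` S"
    then consider (X) j where "j \<in> S" "i = Inl j" | (Y) j where "j \<in> S" "i = Inr j"
      by blast
    then show "{(\<lambda>\<omega>. case i of Inl j \<Rightarrow> f j (Xs j \<omega>) | Inr j \<Rightarrow> g j (Ys j \<omega>)) -` A \<inter> space M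
        | A. A \<in> sets borel} \<subseteq> (case i of
              Inl k \<Rightarrow> {Xs k -` A \<inter> space M | A. A \<in> sets borel}
            | Inr k \<Rightarrow> {Ys k -` B \<inter> space M | B. B \<in> sets borel})"
      by cases (simp_all add: f g preimage_comp_sets_borel_subset)
  qed
qed

lemma (in prob_space) mutually_indep_seqs_integral_prod:
  fixes f :: "nat \<Rightarrow> 'm::euclidean_space \<Rightarrow> 'c::{real_normed_field, banach, second_countable_topology}"
    and g :: "nat \<Rightarrow> 'n::euclidean_space \<Rightarrow> 'c"
  assumes ind: "mutually_indep_seqs M Xs Ys" and S: "finite S" "S \<subseteq> {1..}"
    and f: "\<And>j. j \<in> S \<Longrightarrow> f j \<in> borel_measurable borel"
    and g: "\<And>j. j \<in> S \<Longrightarrow> g j \<in> borel_measurable borel"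
    and int_f: "\<And>j. j \<in> S \<Longrightarrow> integrable M (\<lambda>\<omega>. f j (Xs j \<omega>))"
    and int_g: "\<And>j. j \<in> S \<Longrightarrow> integrable M (\<lambda>\<omega>. g j (Ys j \<omega>))"
  shows "(LINT \<omega>|M. (\<Prod>j\<in>S. f j (Xs j \<omega>)) * (\<Prod>j\<in>S. g j (Ys j \<omega>))) =
    (\<Prod>j\<in>S. LINT \<omega>|M. f j (Xs j \<omega>)) * (\<Prod>j\<in>S. LINT \<omega>|M. g j (Ys j \<omega>))"
proof -
  define h where "h i \<omega> = (case i of Inl j \<Rightarrow> f j (Xs j \<omega>) | Inr j \<Rightarrow> g j (Ys j \<omega>))" for i \<omega>
  have split_prod: "(\<Prod>i\<in>Inl ` S \<union> Inr ` S. F i) = (\<Prod>j\<in>S. F (Inl j)) * (\<Prod>j\<in>S. F (Inr j))"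
    for F :: "nat + nat \<Rightarrow> 'c"
    using S by (subst prod.union_disjoint) (auto simp: prod.reindex)
  have "(LINT \<omega>|M. (\<Prod>i\<in>Inl ` S \<union> Inr ` S. h i \<omega>)) = (\<Prod>i\<in>Inl ` S \<union> Inr ` S. LINT \<omega>|M. h i \<omega>)"
    using S int_f int_g mutually_indep_seqs_indep_vars[OF ind S(2) f g]
    by (intro indep_vars_lebesgue_integral) (auto simp: h_def)
  then show ?thesis
    by (simp add: split_prod h_def)
qed

lemma prod_if_two_points:
  fixes F :: "'b::ab_group_add \<Rightarrow> 'c::comm_monoid_mult"
  assumes "finite S" "k \<in> S" "k' \<in> S" "F 0 = 1"
  shows "(\<Prod>j\<in>S. F ((if j = k then s else 0) - (if j = k' then s' else 0))) =
    (if k = k' then F (s - s') else F s * F (- s'))"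
proof -
  have "(\<Prod>j\<in>S. F ((if j = k then s else 0) - (if j = k' then s' else 0))) =
        (\<Prod>j\<in>{k, k'}. F ((if j = k then s else 0) - (if j = k' then s' else 0)))"
    using assms by (intro prod.mono_neutral_right) auto
  then show ?thesis by (cases "k = k'") auto
qed

lemma (in prob_space) integral_cis_cross_terms:
  fixes Xs :: "nat \<Rightarrow> 'a \<Rightarrow> 'm::euclidean_space" and Ys :: "nat \<Rightarrow> 'a \<Rightarrow> 'n::euclidean_space"
  assumes ind: "mutually_indep_seqs M Xs Ys"
    and \<phi>: "\<And>j. j \<ge> 1 \<Longrightarrow> charfun_vec M (Xs j) = \<phi>"
    and \<psi>: "\<And>j. j \<ge> 1 \<Longrightarrow> charfun_vec M (Ys j) = \<psi>"
    and idx: "k \<ge> 1" "l \<ge> 1" "k' \<ge> 1" "l' \<ge> 1"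
  shows "(LINT \<omega>|M. cis (s \<bullet> Xs k \<omega> - s' \<bullet> Xs k' \<omega> + (t \<bullet> Ys l \<omega> - t' \<bullet> Ys l' \<omega>))) =
    (if k = k' then \<phi> (s - s') else \<phi> s * cnj (\<phi> s')) *
    (if l = l' then \<psi> (t - t') else \<psi> t * cnj (\<psi> t'))" (is "_ = ?rhs")
proof -
  \<comment> \<open>Spread the frequencies over the indices so that the integrand factors over the
    independent coordinates X_j, Y_j.\<close>
  define S where "S = {k, k', l, l'}"
  define \<sigma> where "\<sigma> j = (if j = k then s else 0) - (if j = k' then s' else 0)" for j
  define \<tau> where "\<tau> j = (if j = l then t else 0) - (if j = l' then t' else 0)" for j
  have S: "finite S" "S \<subseteq> {1..}"
    using idx by (auto simp: S_def)
  have meas: "Xs j \<in> borel_measurable M" "Ys j \<in> borel_measurable M" if "j \<in> S" for j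
    using ind S that by (auto simp: mutually_indep_seqs_def)
  have "(\<Sum>j\<in>S. \<sigma> j \<bullet> Xs j \<omega>) = s \<bullet> Xs k \<omega> - s' \<bullet> Xs k' \<omega>"
       "(\<Sum>j\<in>S. \<tau> j \<bullet> Ys j \<omega>) = t \<bullet> Ys l \<omega> - t' \<bullet> Ys l' \<omega>" for \<omega>
    using S by (simp_all add: \<sigma>_def \<tau>_def S_def inner_diff_left sum_subtractf
        if_distrib[of "\<lambda>v. v \<bullet> _"] cong: if_cong)
  then have "(LINT \<omega>|M. cis (s \<bullet> Xs k \<omega> - s' \<bullet> Xs k' \<omega> + (t \<bullet> Ys l \<omega> - t' \<bullet> Ys l' \<omega>))) =
      (LINT \<omega>|M. (\<Prod>j\<in>S. cis (\<sigma> j \<bullet> Xs j \<omega>)) * (\<Prod>j\<in>S. cis (\<tau> j \<bullet> Ys j \<omega>)))"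
    by (simp add: prod_cis cis_mult)
  also have "\<dots> = (\<Prod>j\<in>S. LINT \<omega>|M. cis (\<sigma> j \<bullet> Xs j \<omega>)) * (\<Prod>j\<in>S. LINT \<omega>|M. cis (\<tau> j \<bullet> Ys j \<omega>))"
    using meas by (intro mutually_indep_seqs_integral_prod[OF ind S]) (auto intro: integrable_cis)
  also have "\<dots> = (\<Prod>j\<in>S. \<phi> (\<sigma> j)) * (\<Prod>j\<in>S. \<psi> (\<tau> j))"
    using S \<phi> \<psi> by (simp add: charfun_vec_cis[symmetric] subset_eq)
  also have "\<dots> = ?rhs"
  proof -
    have "\<phi> 0 = 1" "\<psi> 0 = 1" "\<phi> (- s') = cnj (\<phi> s')" "\<psi> (- t') = cnj (\<psi> t')"
      using \<phi>[OF idx(1)] \<psi>[OF idx(2)]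
      by (auto simp: charfun_vec_uminus charfun_vec_zero prob_space_axioms)
    then show ?thesis
      unfolding \<sigma>_def \<tau>_def using S by (simp add: prod_if_two_points S_def)
  qed
  finally show ?thesis .
qed

lemma sum_centered_mult_if:
  fixes b :: "'i \<Rightarrow> 'c::comm_ring"
  assumes "finite T" "l \<in> T" "(\<Sum>l'\<in>T. b l') = 0"
  shows "(\<Sum>l'\<in>T. b l' * (if l = l' then q1 else q0)) = b l * (q1 - q0)"
proof -
  have "(\<Sum>l'\<in>T. b l' * (if l = l' then q1 else q0)) =
      (\<Sum>l'\<in>T. q0 * b l' + (if l = l' then b l' * (q1 - q0) else 0))"
    by (intro sum.cong) (auto simp: algebra_simps)
  also have "\<dots> = b l * (q1 - q0)"
    using assms by (simp add: sum.distrib flip: sum_distrib_left)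
  finally show ?thesis .
qed

lemma sum4_doubly_centered:
  fixes a :: "'i \<Rightarrow> 'j \<Rightarrow> 'c::comm_ring_1"
  assumes S: "finite S" and T: "finite T"
    and col: "\<And>l. l \<in> T \<Longrightarrow> (\<Sum>k\<in>S. a k l) = 0"
    and row: "\<And>k. k \<in> S \<Longrightarrow> (\<Sum>l\<in>T. a k l) = 0"
  shows "(\<Sum>k\<in>S. \<Sum>l\<in>T. \<Sum>k'\<in>S. \<Sum>l'\<in>T.
      a k l * a k' l' * ((if k = k' then p1 else p0) * (if l = l' then q1 else q0))) =
    (p1 - p0) * (q1 - q0) * (\<Sum>k\<in>S. \<Sum>l\<in>T. a k l ^ 2)"
proof -
  have "(\<Sum>k\<in>S. \<Sum>l\<in>T. \<Sum>k'\<in>S. \<Sum>l'\<in>T.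
      a k l * a k' l' * ((if k = k' then p1 else p0) * (if l = l' then q1 else q0))) =
    (\<Sum>k\<in>S. \<Sum>l\<in>T. \<Sum>k'\<in>S. a k l * (if k = k' then p1 else p0) *
      (\<Sum>l'\<in>T. a k' l' * (if l = l' then q1 else q0)))"
    by (simp add: sum_distrib_left mult_ac)
  also have "\<dots> = (\<Sum>k\<in>S. \<Sum>l\<in>T. a k l * (q1 - q0) *
      (\<Sum>k'\<in>S. a k' l * (if k = k' then p1 else p0)))"
    using T row by (simp add: sum_centered_mult_if sum_distrib_left mult_ac)
  also have "\<dots> = (\<Sum>k\<in>S. \<Sum>l\<in>T. a k l * (q1 - q0) * (a k l * (p1 - p0)))"
    using S col by (simp add: sum_centered_mult_if)
  finally show ?thesis
    by (simp add: sum_distrib_left power2_eq_square mult_ac)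
qed

definition Z_weight :: "nat \<Rightarrow> nat \<Rightarrow> nat \<Rightarrow> 'a::field" where
  "Z_weight N k l = (if k = l then 1 / of_nat N else 0) - 1 / of_nat N ^ 2"

lemma cnj_Z_weight [simp]: "cnj (Z_weight N k l) = Z_weight N k l"
  by (simp add: Z_weight_def)

lemma Z_weight_row_sum:
  "k \<in> {1..N} \<Longrightarrow> (\<Sum>l=1..N. Z_weight N k l :: 'a::field_char_0) = 0"
  by (simp add: Z_weight_def sum_subtractf power2_eq_square)

lemma Z_weight_col_sum:
  "l \<in> {1..N} \<Longrightarrow> (\<Sum>k=1..N. Z_weight N k l :: 'a::field_char_0) = 0"
  by (simp add: Z_weight_def sum_subtractf power2_eq_square)

lemma sum_Z_weight_squared:
  assumes "N > 0"
  shows "(\<Sum>k=1..N. \<Sum>l=1..N. Z_weight N k l ^ 2 :: 'a::field_char_0) = of_nat (N - 1) / of_nat N ^ 2"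
proof -
  have "(\<Sum>l=1..N. Z_weight N k l ^ 2 :: 'a) = Z_weight N k k / of_nat N" if "k \<in> {1..N}" for k
  proof -
    have "(\<Sum>l=1..N. Z_weight N k l ^ 2 :: 'a) =
        (\<Sum>l=1..N. (if k = l then Z_weight N k l / of_nat N else 0) - Z_weight N k l / of_nat N ^ 2)"
      by (intro sum.cong) (auto simp: power2_eq_square Z_weight_def[of N k] field_simps)
    also have "\<dots> = Z_weight N k k / of_nat N"
      using that Z_weight_row_sum[OF that, where 'a='a]
      by (simp add: sum_subtractf flip: sum_divide_distrib)
    finally show ?thesis .
  qed
  then have "(\<Sum>k=1..N. \<Sum>l=1..N. Z_weight N k l ^ 2 :: 'a) = of_nat N * ((1 / of_nat N - 1 / of_nat N ^ 2) / of_nat N)"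
    by (simp add: Z_weight_def)
  also have "\<dots> = of_nat (N - 1) / of_nat N ^ 2"
    using assms by (simp add: of_nat_diff field_simps power2_eq_square)
  finally show ?thesis .
qed

lemma Z_N_eq_weighted_sum:
  "Z_N Xs Ys N s t \<omega> = (\<Sum>k=1..N. \<Sum>l=1..N. Z_weight N k l * cis (s \<bullet> Xs k \<omega> + t \<bullet> Ys l \<omega>))"
proof -
  have "(\<Sum>k=1..N. \<Sum>l=1..N. Z_weight N k l * cis (s \<bullet> Xs k \<omega> + t \<bullet> Ys l \<omega>)) =
      (\<Sum>k=1..N. \<Sum>l=1..N. (if k = l then cis (s \<bullet> Xs k \<omega> + t \<bullet> Ys l \<omega>) / of_nat N else 0)
        - cis (s \<bullet> Xs k \<omega> + t \<bullet> Ys l \<omega>) / of_nat N ^ 2)"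
    by (intro sum.cong refl) (auto simp: Z_weight_def algebra_simps)
  also have "\<dots> = Z_N Xs Ys N s t \<omega>"
    by (simp add: Z_N_def sum_subtractf sum_distrib_left cis_conv_exp distrib_left
        flip: sum_divide_distrib)
  finally show ?thesis ..
qed

lemma Z_N_mult_cnj:
  "Z_N Xs Ys N s t \<omega> * cnj (Z_N Xs Ys N s' t' \<omega>) =
    (\<Sum>k=1..N. \<Sum>l=1..N. \<Sum>k'=1..N. \<Sum>l'=1..N. Z_weight N k l * Z_weight N k' l' *
      cis (s \<bullet> Xs k \<omega> - s' \<bullet> Xs k' \<omega> + (t \<bullet> Ys l \<omega> - t' \<bullet> Ys l' \<omega>)))"
proof -
  have "cnj (Z_N Xs Ys N s' t' \<omega>) =
      (\<Sum>k'=1..N. \<Sum>l'=1..N. Z_weight N k' l' * cis (- (s' \<bullet> Xs k' \<omega> + t' \<bullet> Ys l' \<omega>)))"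
    by (simp add: Z_N_eq_weighted_sum cis_cnj)
  then have "Z_N Xs Ys N s t \<omega> * cnj (Z_N Xs Ys N s' t' \<omega>) =
      (\<Sum>k=1..N. \<Sum>l=1..N. Z_weight N k l * cis (s \<bullet> Xs k \<omega> + t \<bullet> Ys l \<omega>)) *
      (\<Sum>k'=1..N. \<Sum>l'=1..N. Z_weight N k' l' * cis (- (s' \<bullet> Xs k' \<omega> + t' \<bullet> Ys l' \<omega>)))"
    by (simp only: Z_N_eq_weighted_sum)
  also have "\<dots> = (\<Sum>k=1..N. \<Sum>l=1..N. \<Sum>k'=1..N. \<Sum>l'=1..N.
      Z_weight N k l * cis (s \<bullet> Xs k \<omega> + t \<bullet> Ys l \<omega>) *
      (Z_weight N k' l' * cis (- (s' \<bullet> Xs k' \<omega> + t' \<bullet> Ys l' \<omega>))))"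
    unfolding sum_distrib_right unfolding sum_distrib_left ..
  finally show ?thesis
    by (simp add: cis_mult algebra_simps)
qed

lemma (in prob_space) integral_Z_N_mult_cnj:
  fixes Xs :: "nat \<Rightarrow> 'a \<Rightarrow> 'm::euclidean_space" and Ys :: "nat \<Rightarrow> 'a \<Rightarrow> 'n::euclidean_space"
  assumes ind: "mutually_indep_seqs M Xs Ys"
    and \<phi>: "\<And>j. j \<ge> 1 \<Longrightarrow> charfun_vec M (Xs j) = \<phi>"
    and \<psi>: "\<And>j. j \<ge> 1 \<Longrightarrow> charfun_vec M (Ys j) = \<psi>"
  shows "(LINT \<omega>|M. Z_N Xs Ys N s t \<omega> * cnj (Z_N Xs Ys N s' t' \<omega>)) =
    of_nat (N - 1) / of_nat N ^ 2 * (\<phi> (s - s') - \<phi> s * cnj (\<phi> s')) * (\<psi> (t - t') - \<psi> t * cnj (\<psi> t'))"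
proof (cases "N = 0")
  case False
  have integrable: "integrable M (\<lambda>\<omega>. cis (s \<bullet> Xs k \<omega> - s' \<bullet> Xs k' \<omega> + (t \<bullet> Ys l \<omega> - t' \<bullet> Ys l' \<omega>)))"
    if "k \<in> {1..N}" "l \<in> {1..N}" "k' \<in> {1..N}" "l' \<in> {1..N}" for k l k' l'
  proof (rule integrable_cis)
    have [measurable]: "Xs k \<in> borel_measurable M" "Xs k' \<in> borel_measurable M"
      "Ys l \<in> borel_measurable M" "Ys l' \<in> borel_measurable M"
      using ind that by (auto simp: mutually_indep_seqs_def)
    show "(\<lambda>\<omega>. s \<bullet> Xs k \<omega> - s' \<bullet> Xs k' \<omega> + (t \<bullet> Ys l \<omega> - t' \<bullet> Ys l' \<omega>)) \<in> borel_measurable M"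
      by measurable
  qed
  have "(LINT \<omega>|M. Z_N Xs Ys N s t \<omega> * cnj (Z_N Xs Ys N s' t' \<omega>)) =
      (\<Sum>k=1..N. \<Sum>l=1..N. \<Sum>k'=1..N. \<Sum>l'=1..N. Z_weight N k l * Z_weight N k' l' *
        (LINT \<omega>|M. cis (s \<bullet> Xs k \<omega> - s' \<bullet> Xs k' \<omega> + (t \<bullet> Ys l \<omega> - t' \<bullet> Ys l' \<omega>))))"
    unfolding Z_N_mult_cnj
    by (subst Bochner_Integration.integral_sum,
        (intro Bochner_Integration.integrable_sum integrable_mult_right integrable; assumption),
        intro sum.cong refl)+
      (rule integral_mult_right_zero)
  also have "\<dots> = (\<Sum>k=1..N. \<Sum>l=1..N. \<Sum>k'=1..N. \<Sum>l'=1..N. Z_weight N k l * Z_weight N k' l' *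
        ((if k = k' then \<phi> (s - s') else \<phi> s * cnj (\<phi> s')) *
         (if l = l' then \<psi> (t - t') else \<psi> t * cnj (\<psi> t'))))"
    by (intro sum.cong refl) (simp add: integral_cis_cross_terms[OF ind \<phi> \<psi>])
  also have "\<dots> = (\<phi> (s - s') - \<phi> s * cnj (\<phi> s')) * (\<psi> (t - t') - \<psi> t * cnj (\<psi> t')) *
      (\<Sum>k=1..N. \<Sum>l=1..N. Z_weight N k l ^ 2)"
    by (intro sum4_doubly_centered finite_atLeastAtMost Z_weight_row_sum Z_weight_col_sum)
  also have "\<dots> = of_nat (N - 1) / of_nat N ^ 2 *
      (\<phi> (s - s') - \<phi> s * cnj (\<phi> s')) * (\<psi> (t - t') - \<psi> t * cnj (\<psi> t'))"
    using False by (subst sum_Z_weight_squared) (simp_all add: mult_ac)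
  finally show ?thesis .
qed (simp add: Z_N_def)

theorem lemma4p6:
  fixes M :: "'a measure"
    and X :: "'a \<Rightarrow> 'm::euclidean_space" and Y :: "'a \<Rightarrow> 'n::euclidean_space"
    and Xs :: "nat \<Rightarrow> 'a \<Rightarrow> 'm" and Ys :: "nat \<Rightarrow> 'a \<Rightarrow> 'n"
    and N :: nat and s s' :: 'm and t t' :: 'n
  assumes "prob_space M"
    and "X \<in> borel_measurable M" and "Y \<in> borel_measurable M"
    and "prob_space.indep_set M {X -` A \<inter> space M | A. A \<in> sets borel}
                              {Y -` B \<inter> space M | B. B \<in> sets borel}"
    and "mutually_indep_seqs M Xs Ys"
    and "\<And>k. k \<ge> 1 \<Longrightarrow> distr M borel (Xs k) = distr M borel X"
    and "\<And>k. k \<ge> 1 \<Longrightarrow> distr M borel (Ys k) = distr M borel Y"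
  shows "(LINT \<omega>|M. Z_N Xs Ys N s t \<omega> * cnj (Z_N Xs Ys N s' t' \<omega>)) =
    (of_nat (N - 1) / of_nat N ^ 2) *
      (charfun_vec M X (s - s') - charfun_vec M X s * cnj (charfun_vec M X s')) *
      (charfun_vec M Y (t - t') - charfun_vec M Y t * cnj (charfun_vec M Y t'))"
proof -
  interpret prob_space M by fact
  have meas: "Xs k \<in> borel_measurable M" "Ys k \<in> borel_measurable M" if "k \<ge> 1" for k
    using assms(5) that by (auto simp: mutually_indep_seqs_def)
  show ?thesis
    using assms(2,3,6,7) meas
    by (intro integral_Z_N_mult_cnj[OF assms(5)] charfun_vec_distr_eq) auto
qed

end
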